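(* Let $V$ be a real vector space, let $R:V\to\mathbb{R}\cup\{+\infty\}$ and $f:\mathbb{R}^m\to\mathbb{R}\cup\{+\infty\}$ be convex functions, and let $\Phi:V\to\mathbb{R}^m$ be linear and surjective. Let $S$ be the set of minimizers of $\min_{u\in V} R(u)+f(\Phi u)$. Assume that $p\in S$, that $R(p)+f(\Phi p)<+\infty$, and that the level set $\mathrm{lev}_R(p)=\{u\in V: R(u)\le R(p)\}$ is linearly closed and contains no line. Let $\ell$ be the dimension of the minimal face $F(\Phi p,\mathrm{lev}_f(\Phi p))$ of $\Phi p$ in $\mathrm{lev}_f(\Phi p)=\{w\in\mathbb{R}^m: f(w)\le f(\Phi p)\}$. If $p$ belongs to a face of $S$ with dimension $j<+\infty$, then $p$ belongs to a face of $\mathrm{lev}_R(p)$ with dimension at most $k$, where $$k=\begin{cases} m-\ell+j-1 & \text{if } R(p)>\inf_V R \text{ or } f(\Phi p)>\inf_{\mathbb{R}^m} f,\\ m-\ell+j & \text{otherwise.}\end{cases}$$ If, moreover, $p$ satisfies the double obliqueness condition, then $k$ can be replaced by $m-\ell+j-2$.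
   Context: Convex-geometric notions (for a convex set $C$ in a real vector space $X$): for $x\neq y$, the open segment is $]x,y[=\{tx+(1-t)y: 0<t<1\}$. A face of $C$ is a convex subset $F\subseteq C$ such that every open segment contained in $C$ which intersects $F$ is contained in $F$. The dimension of a face is the dimension of its affine hull. For $x\in C$, the minimal (elementary) face $F(x,C)$ is the intersection of all faces of $C$ containing $x$ (it is itself a face). $C$ is linearly closed if its intersection with every line is a closed subset of that line; $C$ contains no line if there are no $a\in X$, $v\neq0$ with $a+\mathbb{R}v\subseteq C$. Double obliqueness condition: let $M=R(p)+f(\Phi p)$ be the minimal value, $\mathrm{epi}(R)=\{(u,r)\in V\times\mathbb{R}: R(u)\le r\}$ and $\mathrm{hypo}(M-f)=\{(w,r)\in\mathbb{R}^m\times\mathbb{R}: M-f(w)\ge r\}$. For a convex set $C\subseteq X\times\mathbb{R}$ and $(x,r)\in C$, the face $F((x,r),C)$ is called horizontal if its affine hull is contained in $X\times\{r\}$ and oblique otherwise. The point $p$ satisfies the double obliqueness condition if both $F((p,R(p)),\mathrm{epi}(R))$ and $F((\Phi p, M-f(\Phi p)),\mathrm{hypo}(M-f))$ are oblique (note $M-f(\Phi p)=R(p)$). *)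

theory Defs
  imports "HOL-Analysis.Analysis"
begin

definition is_face :: "'a::real_vector set \<Rightarrow> 'a set \<Rightarrow> bool" where
  "is_face F C \<longleftrightarrow> F \<subseteq> C \<and> convex F \<and>
     (\<forall>x y. x \<noteq> y \<longrightarrow> open_segment x y \<subseteq> C \<longrightarrow> open_segment x y \<inter> F \<noteq> {}
        \<longrightarrow> open_segment x y \<subseteq> F)"

definition min_face :: "'a::real_vector \<Rightarrow> 'a set \<Rightarrow> 'a set" where
  "min_face x C = \<Inter>{F. is_face F C \<and> x \<in> F}"

text \<open>Dimension of the affine hull of a (nonempty) set S: the dimension of the linear
  subspace spanned by the differences x - y (x, y in S), i.e. the supremum of the
  cardinalities of finite linearly independent subsets of it (possibly infinite).\<close>
definition fdim :: "'a::real_vector set \<Rightarrow> enat" where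
  "fdim S = Sup {enat (card B) | B. finite B \<and> independent B \<and>
                   B \<subseteq> span {x - y | x y. x \<in> S \<and> y \<in> S}}"

definition epi :: "('a \<Rightarrow> ereal) \<Rightarrow> ('a \<times> real) set" where
  "epi R = {(u, r). R u \<le> ereal r}"

definition convex_ext :: "('a::real_vector \<Rightarrow> ereal) \<Rightarrow> bool" where
  "convex_ext R \<longleftrightarrow> convex (epi R)"

definition linearly_closed :: "'a::real_vector set \<Rightarrow> bool" where
  "linearly_closed C \<longleftrightarrow> (\<forall>a v. closed {t::real. a + t *\<^sub>R v \<in> C})"

definition contains_no_line :: "'a::real_vector set \<Rightarrow> bool" where
  "contains_no_line C \<longleftrightarrow> \<not> (\<exists>a v. v \<noteq> 0 \<and> (\<forall>t::real. a + t *\<^sub>R v \<in> C))"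

definition lev :: "('a \<Rightarrow> ereal) \<Rightarrow> 'a \<Rightarrow> 'a set" where
  "lev R p = {u. R u \<le> R p}"

definition oblique :: "('a::real_vector \<times> real) \<Rightarrow> ('a \<times> real) set \<Rightarrow> bool" where
  "oblique xr C \<longleftrightarrow> \<not> (affine hull (min_face xr C) \<subseteq> {(x, s). s = snd xr})"

definition hypo_diff :: "ereal \<Rightarrow> ('a \<Rightarrow> ereal) \<Rightarrow> ('a \<times> real) set" where
  "hypo_diff M f = {(w, r). M - f w \<ge> ereal r}"

end

theory Submission
  imports Defs
begin

(* Let U and V be the direction spaces of the minimal faces of p in lev R p and of Phi p in
   lev f (Phi p), and let H = Phi U + V. The directions (v, s) of the epigraph of R at (p, R p),
   i.e. directions along which R grows at most with slope s, form a convex cone whose two-sided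
   part contains U x {0}; likewise for f at Phi p with V x {0}. Minimality of p forbids
   (v, s) and (Phi v, sigma) with s + sigma < 0, and a two-sided such pair is a direction of
   every face of the set of minimizers through p. Hence {w in U. Phi w in V} is contained in
   the direction space of the given face of S, and linear algebra gives dim U + l <= j + dim H.
   If R p or f (Phi p) lies above its infimum, a descent direction leaves H, so dim H < m.
   Under double obliqueness both oblique directions leave H; when H is a hyperplane they
   combine into a direction of the face of S outside U, which lowers the bound once more. *)

lemma convex_ext_le:
  assumes "convex_ext g" "g x \<le> ereal a" "g y \<le> ereal b" "0 \<le> t" "t \<le> 1"
  shows "g ((1 - t) *\<^sub>R x + t *\<^sub>R y) \<le> ereal ((1 - t) * a + t * b)"
proof -
  have "(x, a) \<in> epi g" "(y, b) \<in> epi g" using assms by (auto simp: epi_def)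
  then have "(1 - t) *\<^sub>R (x, a) + t *\<^sub>R (y, b) \<in> epi g"
    using assms(1,4,5) by (intro convexD) (auto simp: convex_ext_def)
  then show ?thesis by (simp add: epi_def)
qed

lemma convex_sublevel_ext:
  assumes "convex_ext g" shows "convex {x. g x \<le> ereal a}"
  unfolding convex_alt using convex_ext_le[OF assms, of _ a _ a] by (simp add: algebra_simps)

definition feasible_dirs :: "'a::real_vector set \<Rightarrow> 'a \<Rightarrow> 'a set" where
  "feasible_dirs C x = {v. \<exists>e>0. x + e *\<^sub>R v \<in> C}"

definition two_sided_dirs :: "'a::real_vector set \<Rightarrow> 'a \<Rightarrow> 'a set" where
  "two_sided_dirs C x = {v. v \<in> feasible_dirs C x \<and> - v \<in> feasible_dirs C x}"

lemma feasible_dirs_segment: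
  assumes "convex C" "x \<in> C" "x + e *\<^sub>R v \<in> C" "0 < e" "0 \<le> t" "t \<le> e"
  shows "x + t *\<^sub>R v \<in> C"
proof -
  have "(1 - t/e) *\<^sub>R x + (t/e) *\<^sub>R (x + e *\<^sub>R v) \<in> C"
    using assms by (intro convexD_alt) auto
  moreover have "(1 - t/e) *\<^sub>R x + (t/e) *\<^sub>R (x + e *\<^sub>R v) = x + t *\<^sub>R v"
    using assms(4) by (simp add: algebra_simps)
  ultimately show ?thesis by simp
qed

lemma feasible_dirs_diff: "x \<in> C \<Longrightarrow> y \<in> C \<Longrightarrow> y - x \<in> feasible_dirs C x"
  by (auto simp: feasible_dirs_def intro: exI[of _ 1])

lemma feasible_dirs_add:
  assumes C: "convex C" "x \<in> C" and "v \<in> feasible_dirs C x" "w \<in> feasible_dirs C x"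
  shows "v + w \<in> feasible_dirs C x"
proof -
  obtain e1 e2 where e: "0 < e1" "x + e1 *\<^sub>R v \<in> C" "0 < e2" "x + e2 *\<^sub>R w \<in> C"
    using assms(3,4) by (auto simp: feasible_dirs_def)
  define e where "e = min e1 e2"
  have "x + e *\<^sub>R v \<in> C" "x + e *\<^sub>R w \<in> C"
    using feasible_dirs_segment[OF C] e by (auto simp: e_def)
  then have "(1/2) *\<^sub>R (x + e *\<^sub>R v) + (1/2) *\<^sub>R (x + e *\<^sub>R w) \<in> C"
    using C(1) by (intro convexD) auto
  moreover have "(1/2) *\<^sub>R (x + e *\<^sub>R v) + (1/2) *\<^sub>R (x + e *\<^sub>R w) = x + (e/2) *\<^sub>R (v + w)"
    by (simp add: algebra_simps flip: scaleR_add_left)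
  ultimately show ?thesis using e by (auto simp: feasible_dirs_def e_def intro!: exI[of _ "e/2"])
qed

lemma feasible_dirs_scale:
  assumes "x \<in> C" "v \<in> feasible_dirs C x" "0 \<le> c"
  shows "c *\<^sub>R v \<in> feasible_dirs C x"
proof (cases "c = 0")
  case True
  then show ?thesis using assms(1) by (auto simp: feasible_dirs_def intro: exI[of _ 1])
next
  case False
  obtain e where "0 < e" "x + e *\<^sub>R v \<in> C" using assms(2) by (auto simp: feasible_dirs_def)
  then show ?thesis using False assms(3) by (auto simp: feasible_dirs_def intro!: exI[of _ "e/c"])
qed

lemma subspace_two_sided_dirs:
  assumes "convex C" "x \<in> C"
  shows "subspace (two_sided_dirs C x)"
  unfolding subspace_def
proof (intro conjI ballI allI)
  show "0 \<in> two_sided_dirs C x"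
    using assms(2) by (auto simp: two_sided_dirs_def feasible_dirs_def intro: exI[of _ 1])
  fix v w assume "v \<in> two_sided_dirs C x" "w \<in> two_sided_dirs C x"
  then show "v + w \<in> two_sided_dirs C x"
    using feasible_dirs_add[OF assms, of v w] feasible_dirs_add[OF assms, of "-v" "-w"]
    by (simp add: two_sided_dirs_def)
next
  fix c and v assume v: "v \<in> two_sided_dirs C x"
  show "c *\<^sub>R v \<in> two_sided_dirs C x"
  proof (cases "0 \<le> c")
    case True
    then show ?thesis
      using v feasible_dirs_scale[OF assms(2), of v c] feasible_dirs_scale[OF assms(2), of "-v" c]
      by (simp add: two_sided_dirs_def)
  next
    case False
    then show ?thesis
      using v feasible_dirs_scale[OF assms(2), of "-v" "-c"] feasible_dirs_scale[OF assms(2), of v "-c"]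
      by (simp add: two_sided_dirs_def)
  qed
qed

definition dir_space :: "'a::real_vector set \<Rightarrow> 'a set" where
  "dir_space S = span {x - y | x y. x \<in> S \<and> y \<in> S}"

lemma open_segment_extend:
  assumes "c \<in> open_segment x y" "y' \<in> open_segment x y"
  shows "\<exists>k>0. c + k *\<^sub>R (c - y') \<in> open_segment x y"
proof -
  obtain a where a: "0 < a" "a < 1" "c = (1 - a) *\<^sub>R x + a *\<^sub>R y" and xy: "x \<noteq> y"
    using assms(1) by (auto simp: in_segment)
  obtain b where b: "0 < b" "b < 1" "y' = (1 - b) *\<^sub>R x + b *\<^sub>R y"
    using assms(2) by (auto simp: in_segment)
  define k where "k = min a (1 - a) / 2"
  have "k > 0" using a by (simp add: k_def)
  have "\<bar>k * (a - b)\<bar> \<le> k"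
    using a b \<open>k > 0\<close> by (simp add: abs_mult mult_left_le)
  then have g: "0 < a + k * (a - b)" "a + k * (a - b) < 1"
    using a by (auto simp: k_def)
  have "c + k *\<^sub>R (c - y') = (1 - (a + k * (a - b))) *\<^sub>R x + (a + k * (a - b)) *\<^sub>R y"
    by (simp add: a(3) b(3) algebra_simps)
  then show ?thesis using g \<open>k > 0\<close> xy by (auto simp: in_segment)
qed

lemma is_face_extendable_through:
  assumes C: "convex C" "p \<in> C"
  shows "is_face {x \<in> C. p - x \<in> feasible_dirs C p} C"
  unfolding is_face_def
proof (intro conjI allI impI)
  show "convex {x \<in> C. p - x \<in> feasible_dirs C p}"
    unfolding convex_alt
  proof (intro ballI allI impI, safe)
    fix x1 x2 and u :: real
    assume x: "x1 \<in> C" "p - x1 \<in> feasible_dirs C p" "x2 \<in> C" "p - x2 \<in> feasible_dirs C p"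
      and u: "0 \<le> u" "u \<le> 1"
    show "(1 - u) *\<^sub>R x1 + u *\<^sub>R x2 \<in> C" using C x u by (intro convexD_alt)
    have "(1 - u) *\<^sub>R (p - x1) + u *\<^sub>R (p - x2) \<in> feasible_dirs C p"
      using x u by (intro feasible_dirs_add feasible_dirs_scale C) auto
    then show "p - ((1 - u) *\<^sub>R x1 + u *\<^sub>R x2) \<in> feasible_dirs C p"
      by (simp add: algebra_simps)
  qed
next
  fix x y
  assume sub: "open_segment x y \<subseteq> C" and "open_segment x y \<inter> {x \<in> C. p - x \<in> feasible_dirs C p} \<noteq> {}"
  then obtain c where c: "c \<in> open_segment x y" "p - c \<in> feasible_dirs C p" by auto
  show "open_segment x y \<subseteq> {x \<in> C. p - x \<in> feasible_dirs C p}"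
  proof (intro subsetI CollectI conjI)
    fix y' assume y': "y' \<in> open_segment x y"
    then show "y' \<in> C" using sub by auto
    obtain k where k: "k > 0" "c + k *\<^sub>R (c - y') \<in> open_segment x y"
      using open_segment_extend[OF c(1) y'] by auto
    have "(c + k *\<^sub>R (c - y') - p) + (p - c) \<in> feasible_dirs C p"
      using k sub c by (intro feasible_dirs_add feasible_dirs_diff C) auto
    then have "k *\<^sub>R (c - y') \<in> feasible_dirs C p" by simp
    then have "c - y' \<in> feasible_dirs C p"
      using feasible_dirs_scale[OF C(2), of _ "1/k"] k(1) by fastforce
    then have "(p - c) + (c - y') \<in> feasible_dirs C p"
      using c(2) by (intro feasible_dirs_add C)
    then show "p - y' \<in> feasible_dirs C p" by simp
  qed
qed auto

lemma p_in_min_face: "p \<in> min_face p C"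
  by (simp add: min_face_def)

lemma is_face_min_face:
  assumes "convex C" "p \<in> C"
  shows "is_face (min_face p C) C"
  unfolding is_face_def
proof (intro conjI allI impI)
  have "is_face C C" using assms(1) by (auto simp: is_face_def)
  then show "min_face p C \<subseteq> C" using assms(2) by (auto simp: min_face_def)
  show "convex (min_face p C)"
    unfolding min_face_def by (rule convex_Inter) (auto simp: is_face_def)
  fix x y assume "x \<noteq> y" "open_segment x y \<subseteq> C" "open_segment x y \<inter> min_face p C \<noteq> {}"
  then show "open_segment x y \<subseteq> min_face p C"
    unfolding min_face_def is_face_def by blast
qed

lemma min_face_subset_extendable_through:
  assumes "convex C" "p \<in> C"
  shows "min_face p C \<subseteq> {x \<in> C. p - x \<in> feasible_dirs C p}"
proof -
  have "p \<in> {x \<in> C. p - x \<in> feasible_dirs C p}"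
    using assms(2) by (auto simp: feasible_dirs_def intro: exI[of _ 1])
  then show ?thesis
    using is_face_extendable_through[OF assms] by (auto simp: min_face_def)
qed

lemma dir_space_min_face_two_sided:
  assumes "convex C" "p \<in> C"
  shows "dir_space (min_face p C) \<subseteq> two_sided_dirs C p"
  unfolding dir_space_def
proof (rule span_minimal[OF _ subspace_two_sided_dirs[OF assms]], safe)
  fix x y assume "x \<in> min_face p C" "y \<in> min_face p C"
  then have x: "x \<in> C" "p - x \<in> feasible_dirs C p" and y: "y \<in> C" "p - y \<in> feasible_dirs C p"
    using min_face_subset_extendable_through[OF assms] by auto
  have "(x - p) + (p - y) \<in> feasible_dirs C p"
    by (rule feasible_dirs_add[OF assms feasible_dirs_diff[OF assms(2) x(1)] y(2)])
  moreover have "(p - x) + (y - p) \<in> feasible_dirs C p"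
    by (rule feasible_dirs_add[OF assms x(2) feasible_dirs_diff[OF assms(2) y(1)]])
  ultimately show "x - y \<in> two_sided_dirs C p" by (simp add: two_sided_dirs_def)
qed

lemma dir_space_face_two_sided:
  assumes F: "is_face F S" "p \<in> F" and e: "0 < e" and line: "\<And>t. \<bar>t\<bar> \<le> e \<Longrightarrow> p + t *\<^sub>R v \<in> S"
  shows "v \<in> dir_space F"
proof (cases "v = 0")
  case True
  then show ?thesis by (simp add: dir_space_def span_zero)
next
  case False
  let ?a = "p - e *\<^sub>R v" and ?b = "p + e *\<^sub>R v"
  have param: "(1 - u) *\<^sub>R ?a + u *\<^sub>R ?b = p + ((2 * u - 1) * e) *\<^sub>R v" for u
    by (simp add: algebra_simps flip: scaleR_add_left)
  have "?b - ?a = (2 * e) *\<^sub>R v" by (simp add: algebra_simps flip: scaleR_add_left)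
  then have ne: "?a \<noteq> ?b" using False e by force
  have "open_segment ?a ?b \<subseteq> S"
  proof
    fix x assume "x \<in> open_segment ?a ?b"
    then obtain u where u: "0 < u" "u < 1" "x = p + ((2 * u - 1) * e) *\<^sub>R v"
      by (auto simp: in_segment param)
    have "\<bar>(2 * u - 1) * e\<bar> \<le> e" using u e by (auto simp: abs_mult abs_le_iff)
    then show "x \<in> S" using line u(3) by auto
  qed
  moreover have "p \<in> open_segment ?a ?b"
    unfolding in_segment by (intro conjI ne exI[of _ "1/2"]) (simp_all only: param, simp_all)
  moreover have "p + (e/2) *\<^sub>R v \<in> open_segment ?a ?b"
    unfolding in_segment by (intro conjI ne exI[of _ "3/4"]) (simp_all only: param, simp_all)
  ultimately have "p + (e/2) *\<^sub>R v \<in> F"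
    using F ne unfolding is_face_def by blast
  then have "(2/e) *\<^sub>R ((p + (e/2) *\<^sub>R v) - p) \<in> dir_space F"
    unfolding dir_space_def using F(2) by (intro span_scale span_base) blast
  then show ?thesis using e by simp
qed

lemma card_le_fdim:
  assumes "fdim F = enat j" "finite I" "independent I" "I \<subseteq> dir_space F"
  shows "card I \<le> j"
proof -
  have "enat (card I) \<le> fdim F"
    unfolding fdim_def using assms(2-4) by (intro Sup_upper) (auto simp: dir_space_def)
  then show ?thesis using assms(1) by simp
qed

lemma fdim_attained:
  assumes "fdim F = enat l"
  obtains L where "finite L" "independent L" "L \<subseteq> dir_space F" "card L = l"
proof -
  let ?A = "{enat (card B) | B. finite B \<and> independent B \<and> B \<subseteq> dir_space F}"
  have "?A \<noteq> {}" by (auto intro!: exI[of _ "{}"] simp: independent_empty)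
  moreover have "Sup ?A = enat l" using assms by (simp add: fdim_def dir_space_def)
  ultimately have "finite ?A" "Max ?A = enat l" by (auto simp: Sup_enat_def split: if_splits)
  with Max_in[of ?A] \<open>?A \<noteq> {}\<close> have "enat l \<in> ?A" by simp
  then show ?thesis using that by auto
qed

lemma fdim_bounded:
  assumes "\<And>B. finite B \<Longrightarrow> independent B \<Longrightarrow> B \<subseteq> dir_space G \<Longrightarrow> card B + a \<le> b"
  obtains d where "fdim G = enat d" "d + a \<le> b"
proof -
  have "fdim G \<le> enat (b - a)"
    unfolding fdim_def using assms by (intro Sup_least) (force simp: dir_space_def)
  then obtain d where "fdim G = enat d" "d \<le> b - a" by (cases "fdim G") auto
  moreover have "a \<le> b" using assms[of "{}"] by (simp add: independent_empty)
  ultimately show ?thesis using that by simp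
qed

lemma two_sided_dirs_line:
  assumes "convex C" "x \<in> C" "v \<in> two_sided_dirs C x"
  obtains e where "0 < e" "\<And>t. \<bar>t\<bar> \<le> e \<Longrightarrow> x + t *\<^sub>R v \<in> C"
proof -
  obtain e1 e2 where e: "0 < e1" "x + e1 *\<^sub>R v \<in> C" "0 < e2" "x + e2 *\<^sub>R (- v) \<in> C"
    using assms(3) by (auto simp: two_sided_dirs_def feasible_dirs_def)
  have line: "x + t *\<^sub>R v \<in> C" if "\<bar>t\<bar> \<le> min e1 e2" for t
  proof (cases "0 \<le> t")
    case True
    then show ?thesis using feasible_dirs_segment[OF assms(1,2) e(2,1), of t] that by simp
  next
    case False
    then show ?thesis using feasible_dirs_segment[OF assms(1,2) e(4,3), of "- t"] that by simp
  qed
  moreover have "0 < min e1 e2" using e by simp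
  ultimately show ?thesis using that by blast
qed

lemma oblique_two_sided_dir:
  assumes "convex C" "(x, r) \<in> C" "oblique (x, r) C"
  obtains v s where "s \<noteq> 0" "(v, s) \<in> two_sided_dirs C (x, r)"
proof -
  have "affine (snd -` {r})" unfolding affine_alt by (simp add: algebra_simps)
  moreover have "\<not> affine hull (min_face (x, r) C) \<subseteq> snd -` {r}"
    using assms(3) unfolding oblique_def by (simp add: vimage_def case_prod_unfold)
  ultimately have "\<not> min_face (x, r) C \<subseteq> snd -` {r}"
    using hull_minimal by blast
  then obtain y s where ys: "(y, s) \<in> min_face (x, r) C" "s \<noteq> r"
    by fastforce
  have "(y, s) - (x, r) \<in> dir_space (min_face (x, r) C)"
    unfolding dir_space_def using ys(1) p_in_min_face by (intro span_base) blast
  then have "(y - x, s - r) \<in> two_sided_dirs C (x, r)"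
    using dir_space_min_face_two_sided[OF assms(1,2)] by auto
  with that[of "s - r" "y - x"] ys(2) show ?thesis by simp
qed

lemma feasible_dirs_sublevel_iff:
  "v \<in> feasible_dirs {u. g u \<le> ereal a} x \<longleftrightarrow> (v, 0) \<in> feasible_dirs (epi g) (x, a)"
  by (simp add: feasible_dirs_def epi_def)

lemma two_sided_dirs_sublevel_iff:
  "v \<in> two_sided_dirs {u. g u \<le> ereal a} x \<longleftrightarrow> (v, 0) \<in> two_sided_dirs (epi g) (x, a)"
  by (simp add: two_sided_dirs_def feasible_dirs_sublevel_iff)

lemma hypo_diff_iff:
  assumes "f w \<noteq> -\<infinity>"
  shows "(w, r) \<in> hypo_diff (ereal c) f \<longleftrightarrow> (w, c - r) \<in> epi f"
  using assms unfolding hypo_diff_def epi_def by (cases "f w") (auto simp: algebra_simps)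

lemma convex_hypo_diff:
  assumes "convex_ext f" "\<forall>w. f w \<noteq> -\<infinity>"
  shows "convex (hypo_diff (ereal c) f)"
  unfolding convex_alt
proof (intro ballI allI impI)
  have mem: "z \<in> hypo_diff (ereal c) f \<longleftrightarrow> f (fst z) \<le> ereal (c - snd z)" for z
    using hypo_diff_iff[of f "fst z" "snd z" c] assms(2) by (simp add: epi_def)
  fix x y and u :: real
  assume "x \<in> hypo_diff (ereal c) f" "y \<in> hypo_diff (ereal c) f" "0 \<le> u \<and> u \<le> 1"
  then have "f ((1 - u) *\<^sub>R fst x + u *\<^sub>R fst y) \<le> ereal ((1 - u) * (c - snd x) + u * (c - snd y))"
    using assms(1) by (intro convex_ext_le) (auto simp: mem)
  then show "(1 - u) *\<^sub>R x + u *\<^sub>R y \<in> hypo_diff (ereal c) f"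
    by (simp add: mem algebra_simps)
qed

lemma two_sided_dirs_hypo_diff:
  assumes "\<forall>w. f w \<noteq> -\<infinity>" "(z, s) \<in> two_sided_dirs (hypo_diff (ereal c) f) (w, r)"
  shows "(z, - s) \<in> two_sided_dirs (epi f) (w, c - r)"
proof -
  have "(w, r) + e *\<^sub>R (y, t) \<in> hypo_diff (ereal c) f \<longleftrightarrow> (w, c - r) + e *\<^sub>R (y, - t) \<in> epi f"
    for e t y
    using hypo_diff_iff[of f "w + e *\<^sub>R y" "r + e * t" c] assms(1) by (simp add: algebra_simps)
  then have "(y, t) \<in> feasible_dirs (hypo_diff (ereal c) f) (w, r) \<longleftrightarrow>
      (y, - t) \<in> feasible_dirs (epi f) (w, c - r)" for y t
    by (simp add: feasible_dirs_def)
  then show ?thesis using assms(2) by (simp add: two_sided_dirs_def)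
qed

lemma linear_image_span_decompose:
  assumes "linear \<Phi>" "span L \<subseteq> V" "\<Phi> b \<in> span (L \<union> \<Phi> ` C)"
  obtains c where "c \<in> span C" "\<Phi> (b - c) \<in> V"
proof -
  obtain y z where yz: "\<Phi> b = y + z" "y \<in> span L" "z \<in> span (\<Phi> ` C)"
    using assms(3) unfolding span_Un by auto
  obtain c where c: "c \<in> span C" "z = \<Phi> c"
    using yz(3) unfolding span_linear_image[OF assms(1)] by auto
  have "\<Phi> (b - c) = y" using yz(1) c(2) linear_diff[OF assms(1)] by simp
  then show ?thesis using that c(1) yz(2) assms(2) by blast
qed

lemma card_independent_le_preimage_bound:
  fixes \<Phi> :: "'a::real_vector \<Rightarrow> 'b::euclidean_space"
  assumes lin: "linear \<Phi>" and U: "subspace U" and V: "subspace V"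
    and L: "finite L" "independent L" "L \<subseteq> V"
    and H: "\<Phi> ` U \<subseteq> H" "V \<subseteq> H"
    and bound: "\<And>I. finite I \<Longrightarrow> independent I \<Longrightarrow> I \<subseteq> {w \<in> U. \<Phi> w \<in> V} \<Longrightarrow> card I \<le> n"
    and B: "finite B" "independent B" "B \<subseteq> U"
  shows "card B + card L \<le> n + dim H"
proof -
  obtain K where K: "L \<subseteq> K" "K \<subseteq> \<Phi> ` B \<union> L" "independent K" "\<Phi> ` B \<union> L \<subseteq> span K"
    using maximal_independent_subset_extend[of L "\<Phi> ` B \<union> L"] L by auto
  have "finite K" using K(2) B(1) L(1) by (meson finite_Un finite_imageI finite_subset)
  have "\<Phi> ` B \<union> L \<subseteq> H" using B(3) H L(3) by blast
  then have "K \<subseteq> H" using K(2) by blast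
  then have card_K: "card K \<le> dim H" using independent_card_le_dim K(3) by blast
  obtain C where C: "C \<subseteq> B" "inj_on \<Phi> C" "K - L = \<Phi> ` C"
    using K(2) subset_image_inj[of "K - L" \<Phi> B] by blast
  have "card C = card (K - L)" using card_image[OF C(2)] C(3) by simp
  also have "\<dots> = card K - card L" by (rule card_Diff_subset[OF L(1) K(1)])
  finally have card_C: "card L + card C = card K"
    using card_mono[OF \<open>finite K\<close> K(1)] by linarith
  have "\<forall>b\<in>B. \<exists>c. c \<in> span C \<and> \<Phi> (b - c) \<in> V"
  proof
    fix b assume "b \<in> B"
    then have "\<Phi> b \<in> span K" using K(4) by auto
    also have "span K \<subseteq> span (L \<union> \<Phi> ` C)" using C(3) by (intro span_mono) blast
    finally have "\<Phi> b \<in> span (L \<union> \<Phi> ` C)" .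
    moreover have "span L \<subseteq> V" using L(3) V by (simp add: span_minimal)
    ultimately obtain c where "c \<in> span C" "\<Phi> (b - c) \<in> V"
      using linear_image_span_decompose[OF lin] by blast
    then show "\<exists>c. c \<in> span C \<and> \<Phi> (b - c) \<in> V" by blast
  qed
  then obtain cf where cf: "\<forall>b\<in>B. cf b \<in> span C \<and> \<Phi> (b - cf b) \<in> V"
    by (rule bchoice[THEN exE])
  have "span C \<subseteq> U" using C(1) B(3) U by (simp add: span_minimal)
  have W: "(\<lambda>b. b - cf b) ` B \<subseteq> {w \<in> U. \<Phi> w \<in> V}"
  proof (rule image_subsetI)
    fix b assume "b \<in> B"
    then have "b \<in> U" "cf b \<in> U" "\<Phi> (b - cf b) \<in> V" using B(3) cf \<open>span C \<subseteq> U\<close> by auto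
    then show "b - cf b \<in> {w \<in> U. \<Phi> w \<in> V}" using subspace_diff[OF U] by blast
  qed
  obtain I where I: "I \<subseteq> (\<lambda>b. b - cf b) ` B" "independent I" "(\<lambda>b. b - cf b) ` B \<subseteq> span I"
    using maximal_independent_subset by metis
  have "finite I" using I(1) B(1) by (meson finite_imageI finite_subset)
  have card_I: "card I \<le> n" using bound[OF \<open>finite I\<close> I(2)] I(1) W by blast
  have "B \<subseteq> span (C \<union> I)"
  proof
    fix b assume "b \<in> B"
    then have "b - cf b \<in> span I" "cf b \<in> span C" using I(3) cf by auto
    then have "b - cf b \<in> span (C \<union> I)" "cf b \<in> span (C \<union> I)"
      using span_mono[of I "C \<union> I"] span_mono[of C "C \<union> I"] by auto
    then have "(b - cf b) + cf b \<in> span (C \<union> I)" by (rule span_add)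
    then show "b \<in> span (C \<union> I)" by simp
  qed
  moreover have "finite (C \<union> I)" using C(1) B(1) \<open>finite I\<close> by (meson finite_Un finite_subset)
  ultimately have "card B \<le> card (C \<union> I)"
    using independent_span_bound[of "C \<union> I" B] B(2) by simp
  also have "\<dots> \<le> card C + card I" by (rule card_Un_le)
  finally show ?thesis using card_K card_C card_I by linarith
qed

lemma argmin_eq_sublevel:
  fixes g :: "'a \<Rightarrow> 'b::preorder"
  assumes "\<forall>v. g p \<le> g v"
  shows "{u. \<forall>v. g u \<le> g v} = {u. g u \<le> g p}"
  using assms order_trans by blast

locale convex_composite_minimum =
  fixes R :: "'v::real_vector \<Rightarrow> ereal" and f :: "'w::euclidean_space \<Rightarrow> ereal"
    and \<Phi> :: "'v \<Rightarrow> 'w" and p :: 'v and rp fp :: real and F :: "'v set"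
  assumes R_conv: "convex_ext R" and f_conv: "convex_ext f" and lin: "linear \<Phi>"
    and R_p: "R p = ereal rp" and f_p: "f (\<Phi> p) = ereal fp"
    and minimum: "\<And>u. ereal (rp + fp) \<le> R u + f (\<Phi> u)"
    and F_face: "is_face F {u. R u + f (\<Phi> u) \<le> ereal (rp + fp)}" and p_F: "p \<in> F"
begin

definition U :: "'v set" where "U = dir_space (min_face p (lev R p))"
definition V :: "'w set" where "V = dir_space (min_face (\<Phi> p) (lev f (\<Phi> p)))"
definition H :: "'w set" where "H = span (\<Phi> ` U \<union> V)"

lemma convex_epi: "convex (epi R)" "convex (epi f)"
  using R_conv f_conv by (simp_all add: convex_ext_def)

lemma p_epi: "(p, rp) \<in> epi R" "(\<Phi> p, fp) \<in> epi f"
  using R_p f_p by (simp_all add: epi_def)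

lemma lev_R_p: "lev R p = {u. R u \<le> ereal rp}" and lev_f_p: "lev f (\<Phi> p) = {w. f w \<le> ereal fp}"
  by (simp_all add: lev_def R_p f_p)

lemma U_two_sided: "v \<in> U \<Longrightarrow> (v, 0) \<in> two_sided_dirs (epi R) (p, rp)"
  using dir_space_min_face_two_sided[OF convex_sublevel_ext[OF R_conv], of p rp] R_p
  by (auto simp: U_def lev_R_p two_sided_dirs_sublevel_iff[symmetric])

lemma V_two_sided: "z \<in> V \<Longrightarrow> (z, 0) \<in> two_sided_dirs (epi f) (\<Phi> p, fp)"
  using dir_space_min_face_two_sided[OF convex_sublevel_ext[OF f_conv], of "\<Phi> p" fp] f_p
  by (auto simp: V_def lev_f_p two_sided_dirs_sublevel_iff[symmetric])

lemma subspace_U: "subspace U" and subspace_V: "subspace V"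
  by (simp_all add: U_def V_def dir_space_def subspace_span)

lemma H_decompose:
  assumes "h \<in> H"
  obtains a b where "a \<in> U" "b \<in> V" "h = \<Phi> a + b"
proof -
  obtain x y where xy: "h = x + y" "x \<in> span (\<Phi> ` U)" "y \<in> span V"
    using assms unfolding H_def span_Un by blast
  have span_U: "span U = U" and span_V: "span V = V" by (simp_all add: subspace_U subspace_V)
  have "x \<in> \<Phi> ` U" "y \<in> V"
    using xy(2,3) unfolding span_linear_image[OF lin] span_U span_V .
  then show ?thesis using xy(1) that by blast
qed

lemma slopes_sum_nonneg:
  assumes "(v, s) \<in> feasible_dirs (epi R) (p, rp)" "(\<Phi> v, \<sigma>) \<in> feasible_dirs (epi f) (\<Phi> p, fp)"
  shows "0 \<le> s + \<sigma>"
proof -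
  obtain e1 e2 where e: "0 < e1" "(p, rp) + e1 *\<^sub>R (v, s) \<in> epi R"
    "0 < e2" "(\<Phi> p, fp) + e2 *\<^sub>R (\<Phi> v, \<sigma>) \<in> epi f"
    using assms by (auto simp: feasible_dirs_def)
  define e where "e = min e1 e2"
  have "(p, rp) + e *\<^sub>R (v, s) \<in> epi R" "(\<Phi> p, fp) + e *\<^sub>R (\<Phi> v, \<sigma>) \<in> epi f"
    using feasible_dirs_segment[OF convex_epi(1) p_epi(1) e(2,1)]
      feasible_dirs_segment[OF convex_epi(2) p_epi(2) e(4,3)] e by (auto simp: e_def)
  then have "R (p + e *\<^sub>R v) + f (\<Phi> (p + e *\<^sub>R v)) \<le> ereal (rp + e * s) + ereal (fp + e * \<sigma>)"
    using linear_add[OF lin] linear_scale[OF lin] by (intro add_mono) (auto simp: epi_def)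
  with minimum[of "p + e *\<^sub>R v"] have "ereal (rp + fp) \<le> ereal (rp + e * s) + ereal (fp + e * \<sigma>)"
    by (rule order_trans)
  then have "0 \<le> e * (s + \<sigma>)" by (simp add: distrib_left)
  moreover have "0 < e" using e by (simp add: e_def)
  ultimately show ?thesis by (simp add: zero_le_mult_iff)
qed

lemma two_sided_slopes:
  assumes "(v, s) \<in> two_sided_dirs (epi R) (p, rp)" "(\<Phi> v, \<sigma>) \<in> two_sided_dirs (epi f) (\<Phi> p, fp)"
  shows "s + \<sigma> = 0" "v \<in> dir_space F"
proof -
  have "0 \<le> s + \<sigma>" "0 \<le> - s + - \<sigma>"
    using assms slopes_sum_nonneg[of v s \<sigma>] slopes_sum_nonneg[of "- v" "- s" "- \<sigma>"]
    by (simp_all add: two_sided_dirs_def linear_neg[OF lin])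
  then show sum: "s + \<sigma> = 0" by simp
  obtain e1 where e1: "0 < e1" "\<And>t. \<bar>t\<bar> \<le> e1 \<Longrightarrow> (p, rp) + t *\<^sub>R (v, s) \<in> epi R"
    using two_sided_dirs_line[OF convex_epi(1) p_epi(1) assms(1)] by blast
  obtain e2 where e2: "0 < e2" "\<And>t. \<bar>t\<bar> \<le> e2 \<Longrightarrow> (\<Phi> p, fp) + t *\<^sub>R (\<Phi> v, \<sigma>) \<in> epi f"
    using two_sided_dirs_line[OF convex_epi(2) p_epi(2) assms(2)] by blast
  have "p + t *\<^sub>R v \<in> {u. R u + f (\<Phi> u) \<le> ereal (rp + fp)}" if "\<bar>t\<bar> \<le> min e1 e2" for t
  proof -
    have "R (p + t *\<^sub>R v) + f (\<Phi> (p + t *\<^sub>R v)) \<le> ereal (rp + t * s) + ereal (fp + t * \<sigma>)"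
      using e1(2)[of t] e2(2)[of t] that linear_add[OF lin] linear_scale[OF lin]
      by (intro add_mono) (auto simp: epi_def)
    also have "\<dots> = ereal (rp + fp + t * (s + \<sigma>))" by (simp add: distrib_left)
    also have "\<dots> = ereal (rp + fp)" using sum by simp
    finally show ?thesis by simp
  qed
  then show "v \<in> dir_space F"
    using dir_space_face_two_sided[OF F_face p_F] e1(1) e2(1) by (metis min_less_iff_conj)
qed

lemma preimage_subset_dir_space: "{w \<in> U. \<Phi> w \<in> V} \<subseteq> dir_space F"
  using two_sided_slopes(2) U_two_sided V_two_sided by blast

lemma slope_R_nonneg_in_H:
  assumes "(v, s) \<in> feasible_dirs (epi R) (p, rp)" "\<Phi> v \<in> H"
  shows "0 \<le> s"
proof -
  obtain a b where ab: "a \<in> U" "b \<in> V" "\<Phi> v = \<Phi> a + b" using H_decompose assms(2) by blast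
  have "(v, s) + (- a, 0) \<in> feasible_dirs (epi R) (p, rp)"
    using assms(1) U_two_sided[OF ab(1)] by (intro feasible_dirs_add convex_epi p_epi) (simp_all add: two_sided_dirs_def)
  moreover have "\<Phi> (v - a) = b" using ab(3) linear_diff[OF lin] by simp
  ultimately show ?thesis
    using slopes_sum_nonneg[of "v - a" s 0] V_two_sided[OF ab(2)] by (simp add: two_sided_dirs_def)
qed

lemma slope_f_nonneg_in_H:
  assumes "(z, \<sigma>) \<in> feasible_dirs (epi f) (\<Phi> p, fp)" "z \<in> H"
  shows "0 \<le> \<sigma>"
proof -
  obtain a b where ab: "a \<in> U" "b \<in> V" "z = \<Phi> a + b" using H_decompose assms(2) by blast
  have "(z, \<sigma>) + (- b, 0) \<in> feasible_dirs (epi f) (\<Phi> p, fp)"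
    using assms(1) V_two_sided[OF ab(2)] by (intro feasible_dirs_add convex_epi p_epi) (simp_all add: two_sided_dirs_def)
  moreover have "z - b = \<Phi> a" using ab(3) by simp
  ultimately show ?thesis
    using slopes_sum_nonneg[of a 0 \<sigma>] U_two_sided[OF ab(1)] by (simp add: two_sided_dirs_def)
qed

lemma H_neq_UNIV_if_above_inf:
  assumes "R p > (INF u. R u) \<or> f (\<Phi> p) > (INF w. f w)"
  shows "H \<noteq> UNIV"
  using assms
proof
  assume "R p > (INF u. R u)"
  then obtain u r where "R u \<le> ereal r" "r < rp"
    using R_p by (metis INF_less_iff ereal_dense2 less_ereal.simps(1) order_less_imp_le)
  then have "(u - p, r - rp) \<in> feasible_dirs (epi R) (p, rp)"
    using feasible_dirs_diff[OF p_epi(1), of "(u, r)"] by (simp add: epi_def)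
  with \<open>r < rp\<close> show ?thesis using slope_R_nonneg_in_H by fastforce
next
  assume "f (\<Phi> p) > (INF w. f w)"
  then obtain w r where "f w \<le> ereal r" "r < fp"
    using f_p by (metis INF_less_iff ereal_dense2 less_ereal.simps(1) order_less_imp_le)
  then have "(w - \<Phi> p, r - fp) \<in> feasible_dirs (epi f) (\<Phi> p, fp)"
    using feasible_dirs_diff[OF p_epi(2), of "(w, r)"] by (simp add: epi_def)
  with \<open>r < fp\<close> show ?thesis using slope_f_nonneg_in_H by fastforce
qed

lemma oblique_R_not_in_H:
  assumes "(v, s) \<in> two_sided_dirs (epi R) (p, rp)" "s \<noteq> 0"
  shows "\<Phi> v \<notin> H"
proof
  assume "\<Phi> v \<in> H"
  moreover have "\<Phi> (- v) = - \<Phi> v" by (rule linear_neg[OF lin])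
  ultimately have "0 \<le> s" "0 \<le> - s"
    using assms(1) slope_R_nonneg_in_H[of v s] slope_R_nonneg_in_H[of "- v" "- s"]
    by (simp_all add: two_sided_dirs_def span_neg H_def)
  with assms(2) show False by simp
qed

lemma oblique_f_not_in_H:
  assumes "(z, \<sigma>) \<in> two_sided_dirs (epi f) (\<Phi> p, fp)" "\<sigma> \<noteq> 0"
  shows "z \<notin> H"
proof
  assume "z \<in> H"
  then have "0 \<le> \<sigma>" "0 \<le> - \<sigma>"
    using assms(1) slope_f_nonneg_in_H[of z \<sigma>] slope_f_nonneg_in_H[of "- z" "- \<sigma>"]
    by (simp_all add: two_sided_dirs_def span_neg H_def)
  with assms(2) show False by simp
qed

lemma subspace_H: "subspace H"
  by (simp add: H_def subspace_span)

lemma dim_H_less: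
  assumes "H \<noteq> UNIV" shows "dim H < DIM('w)"
proof -
  have "span H = H" by (simp add: subspace_H)
  then have "dim H \<noteq> DIM('w)" using dim_eq_full[of H, unfolded \<open>span H = H\<close>] assms by simp
  then show ?thesis using dim_subset_UNIV[of H] by simp
qed

text \<open>If \<open>H\<close> is a hyperplane, then \<open>z = c \<Phi> v\<close> modulo \<open>H\<close> with \<open>c \<noteq> 0\<close>; corrected by an
  element of \<open>U\<close>, \<open>c v\<close> becomes a two-sided direction for both \<open>R\<close> and \<open>f \<circ> \<Phi>\<close>, hence a
  direction of \<open>F\<close>, and it is not in \<open>U\<close> because \<open>\<Phi> v \<notin> H\<close>.\<close>
lemma double_oblique_dir_outside_U:
  assumes v: "(v, s) \<in> two_sided_dirs (epi R) (p, rp)" "s \<noteq> 0"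
    and z: "(z, \<sigma>) \<in> two_sided_dirs (epi f) (\<Phi> p, fp)" "\<sigma> \<noteq> 0"
    and hyperplane: "dim H + 1 = DIM('w)"
  obtains d where "d \<in> dir_space F" "d \<notin> U"
proof -
  have vH: "\<Phi> v \<notin> H" and zH: "z \<notin> H"
    using oblique_R_not_in_H[OF v] oblique_f_not_in_H[OF z] by auto
  have span_H: "span H = H" by (simp add: subspace_H)
  have "dim (insert (\<Phi> v) H) = DIM('w)" using dim_insert[of "\<Phi> v" H] vH span_H hyperplane by simp
  then have "z \<in> span (insert (\<Phi> v) H)" using dim_eq_full by blast
  then obtain c where "z - c *\<^sub>R \<Phi> v \<in> H" using span_breakdown_eq span_H by blast
  then obtain a b where ab: "a \<in> U" "b \<in> V" "z - c *\<^sub>R \<Phi> v = \<Phi> a + b" using H_decompose by blast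
  have "c \<noteq> 0"
  proof
    assume "c = 0"
    then have "z = \<Phi> a + b" using ab(3) by simp
    moreover have "\<Phi> a \<in> H" "b \<in> H" using ab(1,2) by (auto simp: H_def intro: span_base)
    ultimately show False using zH subspace_add[OF subspace_H] by simp
  qed
  define d where "d = c *\<^sub>R v + a"
  have "c *\<^sub>R (v, s) + (a, 0) \<in> two_sided_dirs (epi R) (p, rp)"
    using subspace_two_sided_dirs[OF convex_epi(1) p_epi(1)] v(1) U_two_sided[OF ab(1)]
    by (intro subspace_add subspace_scale)
  moreover have "(z, \<sigma>) + - (b, 0) \<in> two_sided_dirs (epi f) (\<Phi> p, fp)"
    using subspace_two_sided_dirs[OF convex_epi(2) p_epi(2)] z(1) V_two_sided[OF ab(2)]
    by (intro subspace_add subspace_neg)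
  moreover have "\<Phi> d = z - b"
    using ab(3) linear_add[OF lin] linear_scale[OF lin] by (simp add: d_def algebra_simps)
  ultimately have "d \<in> dir_space F" using two_sided_slopes(2)[of d] by (simp add: d_def)
  moreover have "d \<notin> U"
  proof
    assume "d \<in> U"
    then have "(1/c) *\<^sub>R (d - a) \<in> U" using ab(1) subspace_U by (simp add: subspace_diff subspace_scale)
    then have "v \<in> U" using \<open>c \<noteq> 0\<close> by (simp add: d_def)
    then show False using vH by (auto simp: H_def intro: span_base)
  qed
  ultimately show ?thesis using that by blast
qed

lemma fdim_min_face_lev_le_preimage_bound:
  assumes l: "fdim (min_face (\<Phi> p) (lev f (\<Phi> p))) = enat l"
    and bound: "\<And>I. finite I \<Longrightarrow> independent I \<Longrightarrow> I \<subseteq> {w \<in> U. \<Phi> w \<in> V} \<Longrightarrow> card I \<le> n"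
  obtains d where "fdim (min_face p (lev R p)) = enat d" "d + l \<le> n + dim H"
proof -
  obtain L where L: "finite L" "independent L" "L \<subseteq> V" "card L = l"
    using fdim_attained[OF l] unfolding V_def by blast
  have "\<Phi> ` U \<subseteq> H" "V \<subseteq> H" by (auto simp: H_def intro: span_base)
  then have "card B + l \<le> n + dim H"
    if "finite B" "independent B" "B \<subseteq> dir_space (min_face p (lev R p))" for B
    using card_independent_le_preimage_bound[OF lin subspace_U subspace_V L(1-3) _ _ bound] that L(4)
    by (simp add: U_def)
  then show ?thesis using fdim_bounded that by blast
qed

theorem fdim_min_face_lev_le:
  assumes "fdim F = enat j" "fdim (min_face (\<Phi> p) (lev f (\<Phi> p))) = enat l"
  obtains d where "fdim (min_face p (lev R p)) = enat d" "d + l \<le> j + dim H"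
  using fdim_min_face_lev_le_preimage_bound[OF assms(2)] card_le_fdim[OF assms(1)]
    preimage_subset_dir_space by blast

lemma fdim_min_face_lev_le_oblique_dirs:
  assumes j: "fdim F = enat j" and l: "fdim (min_face (\<Phi> p) (lev f (\<Phi> p))) = enat l"
    and v: "(v, s) \<in> two_sided_dirs (epi R) (p, rp)" "s \<noteq> 0"
    and z: "(z, \<sigma>) \<in> two_sided_dirs (epi f) (\<Phi> p, fp)" "\<sigma> \<noteq> 0"
  obtains d where "fdim (min_face p (lev R p)) = enat d" "d + l + 2 \<le> j + DIM('w)"
proof (cases "dim H + 2 \<le> DIM('w)")
  case True
  obtain d where d: "fdim (min_face p (lev R p)) = enat d" "d + l \<le> j + dim H"
    using fdim_min_face_lev_le[OF j l] by blast
  show ?thesis by (rule that[OF d(1)]) (use d(2) True in linarith)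
next
  case False
  moreover have "H \<noteq> UNIV" using oblique_R_not_in_H[OF v] by blast
  ultimately have hyperplane: "dim H + 1 = DIM('w)" using dim_H_less by linarith
  obtain u where u: "u \<in> dir_space F" "u \<notin> U"
    using double_oblique_dir_outside_U[OF v z hyperplane] by blast
  have card_I: "card I + 1 \<le> j" if I: "finite I" "independent I" "I \<subseteq> {w \<in> U. \<Phi> w \<in> V}" for I
  proof -
    have "I \<subseteq> U" using I(3) by blast
    then have "span I \<subseteq> U" using subspace_U by (rule span_minimal)
    then have "u \<notin> span I" "u \<notin> I" using u(2) span_superset[of I] by blast+
    then have "independent (insert u I)" using I(2) by (simp add: independent_insert)
    moreover have "insert u I \<subseteq> dir_space F" using u(1) I(3) preimage_subset_dir_space by blast
    ultimately have "card (insert u I) \<le> j" using card_le_fdim[OF j] I(1) by blast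
    then show ?thesis using card_insert_disjoint[OF I(1) \<open>u \<notin> I\<close>] by simp
  qed
  have "1 \<le> j" using card_I[of "{}"] by (simp add: independent_empty)
  have "card I \<le> j - 1" if "finite I" "independent I" "I \<subseteq> {w \<in> U. \<Phi> w \<in> V}" for I
    using card_I[OF that] by linarith
  then obtain d where d: "fdim (min_face p (lev R p)) = enat d" "d + l \<le> (j - 1) + dim H"
    using fdim_min_face_lev_le_preimage_bound[OF l] by blast
  show ?thesis by (rule that[OF d(1)]) (use d(2) hyperplane \<open>1 \<le> j\<close> in linarith)
qed

lemma oblique_hypo_two_sided_dir:
  assumes "\<forall>w. f w \<noteq> -\<infinity>" "oblique (\<Phi> p, rp) (hypo_diff (ereal (rp + fp)) f)"
  obtains z \<sigma> where "\<sigma> \<noteq> 0" "(z, \<sigma>) \<in> two_sided_dirs (epi f) (\<Phi> p, fp)"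
proof -
  have "(\<Phi> p, rp) \<in> hypo_diff (ereal (rp + fp)) f"
    using hypo_diff_iff[of f "\<Phi> p" rp "rp + fp"] assms(1) p_epi(2) by simp
  then obtain z \<sigma> where z: "\<sigma> \<noteq> 0" "(z, \<sigma>) \<in> two_sided_dirs (hypo_diff (ereal (rp + fp)) f) (\<Phi> p, rp)"
    using oblique_two_sided_dir[OF convex_hypo_diff[OF f_conv assms(1)] _ assms(2)] by blast
  have "(z, - \<sigma>) \<in> two_sided_dirs (epi f) (\<Phi> p, rp + fp - rp)"
    by (rule two_sided_dirs_hypo_diff[OF assms(1) z(2)])
  then show ?thesis using that[of "- \<sigma>" z] z(1) by simp
qed

theorem fdim_min_face_lev_le_double_oblique:
  assumes "fdim F = enat j" "fdim (min_face (\<Phi> p) (lev f (\<Phi> p))) = enat l"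
    and "\<forall>w. f w \<noteq> -\<infinity>" "oblique (p, rp) (epi R)" "oblique (\<Phi> p, rp) (hypo_diff (ereal (rp + fp)) f)"
  obtains d where "fdim (min_face p (lev R p)) = enat d" "d + l + 2 \<le> j + DIM('w)"
proof -
  obtain v s where v: "s \<noteq> 0" "(v, s) \<in> two_sided_dirs (epi R) (p, rp)"
    using oblique_two_sided_dir[OF convex_epi(1) p_epi(1) assms(4)] by blast
  obtain z \<sigma> where z: "\<sigma> \<noteq> 0" "(z, \<sigma>) \<in> two_sided_dirs (epi f) (\<Phi> p, fp)"
    using oblique_hypo_two_sided_dir[OF assms(3,5)] by blast
  show ?thesis using fdim_min_face_lev_le_oblique_dirs[OF assms(1,2) v(2,1) z(2,1)] that by blast
qed

lemma is_face_min_face_lev: "is_face (min_face p (lev R p)) (lev R p)"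
  using is_face_min_face[OF convex_sublevel_ext[OF R_conv]] R_p by (simp add: lev_R_p)

end

theorem theorem1:
  fixes R :: "'v::real_vector \<Rightarrow> ereal"
    and f :: "real^'m \<Rightarrow> ereal"
    and \<Phi> :: "'v \<Rightarrow> real^'m"
    and p :: 'v and l j :: nat
  assumes R_conv: "convex_ext R" and R_ninf: "\<forall>u. R u \<noteq> -\<infinity>"
    and f_conv: "convex_ext f" and f_ninf: "\<forall>w. f w \<noteq> -\<infinity>"
    and lin: "linear \<Phi>" and sur: "surj \<Phi>"
    and S_def: "S = {u. \<forall>v. R u + f (\<Phi> u) \<le> R v + f (\<Phi> v)}"
    and pS: "p \<in> S"
    and fin: "R p + f (\<Phi> p) < \<infinity>"
    and lc: "linearly_closed (lev R p)"
    and nl: "contains_no_line (lev R p)"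
    and l_def: "fdim (min_face (\<Phi> p) (lev f (\<Phi> p))) = enat l"
    and k_def: "k = (if R p > (INF u. R u) \<or> f (\<Phi> p) > (INF w. f w)
                     then int CARD('m) - int l + int j - 1
                     else int CARD('m) - int l + int j)"
    and faceS: "\<exists>F. is_face F S \<and> p \<in> F \<and> fdim F = enat j"
  shows "(\<exists>G d. is_face G (lev R p) \<and> p \<in> G \<and> fdim G = enat d \<and> int d \<le> k)
       \<and> ((oblique (p, real_of_ereal (R p)) (epi R)
           \<and> oblique (\<Phi> p, real_of_ereal ((R p + f (\<Phi> p)) - f (\<Phi> p)))
                     (hypo_diff (R p + f (\<Phi> p)) f))
          \<longrightarrow> (\<exists>G d. is_face G (lev R p) \<and> p \<in> G \<and> fdim G = enat d
                     \<and> int d \<le> int CARD('m) - int l + int j - 2))"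
proof -
  obtain F where F: "is_face F S" "p \<in> F" "fdim F = enat j" using faceS by blast
  obtain rp fp where rp: "R p = ereal rp" and fp: "f (\<Phi> p) = ereal fp"
    using fin R_ninf f_ninf by (cases "R p"; cases "f (\<Phi> p)") auto
  have "S = {u. R u + f (\<Phi> u) \<le> ereal (rp + fp)}"
    using argmin_eq_sublevel[of "\<lambda>u. R u + f (\<Phi> u)" p] pS rp fp by (simp add: S_def)
  moreover have "ereal (rp + fp) \<le> R u + f (\<Phi> u)" for u using pS rp fp by (simp add: S_def)
  ultimately interpret convex_composite_minimum R f \<Phi> p rp fp F
    using R_conv f_conv lin rp fp F by (intro convex_composite_minimum.intro) auto
  let ?G = "min_face p (lev R p)"
  obtain d where d: "fdim ?G = enat d" "d + l \<le> j + dim H"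
    using fdim_min_face_lev_le[OF F(3) l_def] by blast
  have "dim H \<le> CARD('m)" using dim_subset_UNIV[of H] by simp
  moreover have "dim H < CARD('m)" if "R p > (INF u. R u) \<or> f (\<Phi> p) > (INF w. f w)"
    using dim_H_less[OF H_neq_UNIV_if_above_inf[OF that]] by simp
  ultimately have "int d \<le> k" using d(2) by (auto simp: k_def)
  moreover have "\<exists>d. fdim ?G = enat d \<and> int d \<le> int CARD('m) - int l + int j - 2"
    if "oblique (p, rp) (epi R)" "oblique (\<Phi> p, rp) (hypo_diff (ereal (rp + fp)) f)"
    using fdim_min_face_lev_le_double_oblique[OF F(3) l_def f_ninf that] by fastforce
  ultimately show ?thesis using is_face_min_face_lev p_in_min_face d(1) rp fp by auto
qed

end
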